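(* Let $\|\cdot\|$ be a norm on $\mathbb{R}^n$ such that its dual norm $\|\cdot\|^*$ is an algebra norm. Then $\|f\|\ge|\mathbb{E}_xf(x)|$ and $\|f\|^*\ge\|f\|_\infty$ for every $f\in\mathbb{R}^n$.
   Context: Functions in $\mathbb{R}^n$ are functions on $\{1,\dots,n\}$; $\mathbb{E}_x$ denotes $\frac1n\sum_x$, $\langle f,g\rangle=\mathbb{E}_xf(x)g(x)$, $\|f\|_\infty=\max_x|f(x)|$. The dual norm is $\|\phi\|^*=\max\{\langle f,\phi\rangle:\|f\|\le1\}$. An algebra norm is a norm $N$ on $\mathbb{R}^n$ with $N(fg)\le N(f)N(g)$ for all $f,g$ (pointwise product) and $N(\mathbf 1)=1$ for the constant function $\mathbf 1$. *)

theory Defs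
  imports "HOL-Analysis.Analysis"
begin

text \<open>Functions in R^n are functions on a finite index type 'n (with CARD('n) = n).\<close>

definition expect :: "('n::finite \<Rightarrow> real) \<Rightarrow> real" where
  "expect f = (\<Sum>x\<in>UNIV. f x) / real CARD('n)"

definition ip :: "('n::finite \<Rightarrow> real) \<Rightarrow> ('n \<Rightarrow> real) \<Rightarrow> real" where
  "ip f g = expect (\<lambda>x. f x * g x)"

definition sup_norm :: "('n::finite \<Rightarrow> real) \<Rightarrow> real" where
  "sup_norm f = Max (range (\<lambda>x. \<bar>f x\<bar>))"

definition is_norm :: "(('n::finite \<Rightarrow> real) \<Rightarrow> real) \<Rightarrow> bool" where
  "is_norm N \<longleftrightarrow>
     (\<forall>f. N f \<ge> 0) \<and> (\<forall>f. N f = 0 \<longleftrightarrow> f = (\<lambda>_. 0)) \<and>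
     (\<forall>c f. N (\<lambda>x. c * f x) = \<bar>c\<bar> * N f) \<and>
     (\<forall>f g. N (\<lambda>x. f x + g x) \<le> N f + N g)"

definition dual_norm :: "(('n::finite \<Rightarrow> real) \<Rightarrow> real) \<Rightarrow> ('n \<Rightarrow> real) \<Rightarrow> real" where
  "dual_norm N \<phi> = Sup {ip f \<phi> | f. N f \<le> 1}"

definition is_algebra_norm :: "(('n::finite \<Rightarrow> real) \<Rightarrow> real) \<Rightarrow> bool" where
  "is_algebra_norm N \<longleftrightarrow> is_norm N \<and>
     (\<forall>f g. N (\<lambda>x. f x * g x) \<le> N f * N g) \<and> N (\<lambda>_. 1) = 1"

end

theory Submission
  imports Defs
begin

text \<open>
  Testing the constant function 1 against f and -f in the definition of the dual norm
  gives \<open>\<bar>E f\<bar> \<le> \<parallel>f\<parallel> \<parallel>1\<parallel>\<^sup>* = \<parallel>f\<parallel>\<close>. Testing a scaled point mass at a against \<open>\<phi>\<close> gives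
  \<open>\<bar>\<phi> a\<bar> \<le> C \<parallel>\<phi>\<parallel>\<^sup>*\<close> for a constant C; applied to \<open>\<phi>\<^sup>k\<close> and combined with submultiplicativity
  this yields \<open>\<bar>\<phi> a\<bar>\<^sup>k \<le> C (\<parallel>\<phi>\<parallel>\<^sup>*)\<^sup>k\<close> for all k, hence \<open>\<bar>\<phi> a\<bar> \<le> \<parallel>\<phi>\<parallel>\<^sup>*\<close>.
  Since the dual norm is defined as a supremum, one first needs that it is finite, i.e. that the
  unit ball of a norm on a finite-dimensional space is bounded; this follows by compactness of
  the Euclidean unit sphere.
\<close>

lemma is_norm_nonneg: "is_norm N \<Longrightarrow> N f \<ge> 0"
  unfolding is_norm_def by blast

lemma is_norm_eq_0_iff: "is_norm N \<Longrightarrow> N f = 0 \<longleftrightarrow> f = (\<lambda>_. 0)"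
  unfolding is_norm_def by blast

lemma is_norm_pos: "is_norm N \<Longrightarrow> f \<noteq> (\<lambda>_. 0) \<Longrightarrow> N f > 0"
  using is_norm_nonneg is_norm_eq_0_iff by (metis order_le_less)

lemma is_norm_scale: "is_norm N \<Longrightarrow> N (\<lambda>x. c * f x) = \<bar>c\<bar> * N f"
  unfolding is_norm_def by blast

lemma is_norm_triangle: "is_norm N \<Longrightarrow> N (\<lambda>x. f x + g x) \<le> N f + N g"
  unfolding is_norm_def by blast

lemma is_norm_minus: "is_norm N \<Longrightarrow> N (\<lambda>x. - f x) = N f"
  using is_norm_scale[of N "-1" f] by simp

lemma is_norm_zero: "is_norm N \<Longrightarrow> N (\<lambda>_. 0) = 0"
  using is_norm_eq_0_iff by blast

lemma is_norm_sum:
  assumes "is_norm N" "finite S"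
  shows "N (\<lambda>y. \<Sum>x\<in>S. g x y) \<le> (\<Sum>x\<in>S. N (g x))"
  using assms(2)
proof (induction S rule: finite_induct)
  case empty
  then show ?case using is_norm_zero[OF assms(1)] by simp
next
  case (insert a S)
  then have "N (\<lambda>y. \<Sum>x\<in>insert a S. g x y) = N (\<lambda>y. g a y + (\<Sum>x\<in>S. g x y))"
    by simp
  also have "\<dots> \<le> N (g a) + N (\<lambda>y. \<Sum>x\<in>S. g x y)"
    by (rule is_norm_triangle[OF assms(1)])
  finally show ?case using insert by simp
qed

lemma is_norm_diff_le: "is_norm N \<Longrightarrow> N f - N g \<le> N (\<lambda>x. f x - g x)"
  using is_norm_triangle[of N "\<lambda>x. f x - g x" g] by simp

lemma is_norm_le_sum_abs:
  fixes f :: "'n::finite \<Rightarrow> real"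
  assumes "is_norm N"
  shows "N f \<le> (\<Sum>x\<in>UNIV. \<bar>f x\<bar> * N (indicator {x}))"
proof -
  have "f = (\<lambda>y. \<Sum>x\<in>UNIV. f x * indicator {x} y)"
    by (auto simp: indicator_def if_distrib cong: if_cong)
  then have "N f = N (\<lambda>y. \<Sum>x\<in>UNIV. f x * indicator {x} y)"
    by simp
  also have "\<dots> \<le> (\<Sum>x\<in>UNIV. N (\<lambda>y. f x * indicator {x} y))"
    by (rule is_norm_sum[OF assms]) simp
  also have "\<dots> = (\<Sum>x\<in>UNIV. \<bar>f x\<bar> * N (indicator {x}))"
    using is_norm_scale[OF assms] by simp
  finally show ?thesis .
qed

lemma is_norm_le_mult_norm:
  fixes N :: "('n::finite \<Rightarrow> real) \<Rightarrow> real"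
  assumes "is_norm N"
  shows "N (vec_nth v) \<le> (\<Sum>x\<in>UNIV. N (indicator {x})) * norm v"
proof -
  have "N (vec_nth v) \<le> (\<Sum>x\<in>UNIV. \<bar>v $ x\<bar> * N (indicator {x}))"
    by (rule is_norm_le_sum_abs[OF assms])
  also have "\<dots> \<le> (\<Sum>x\<in>UNIV. norm v * N (indicator {x}))"
    by (intro sum_mono mult_right_mono is_norm_nonneg[OF assms])
      (metis component_le_norm_cart real_norm_def)
  finally show ?thesis
    by (simp add: sum_distrib_left mult.commute)
qed

lemma is_norm_lipschitz:
  fixes N :: "('n::finite \<Rightarrow> real) \<Rightarrow> real"
  assumes "is_norm N"
  shows "(\<Sum>x\<in>UNIV. N (indicator {x}))-lipschitz_on UNIV (\<lambda>v. N (vec_nth v))"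
proof (rule lipschitz_onI)
  let ?C = "\<Sum>x\<in>UNIV. N (indicator {x} :: 'n \<Rightarrow> real)"
  fix v w :: "real^'n"
  have diff: "vec_nth (v - w) = (\<lambda>i. v $ i - w $ i)" for v w :: "real^'n"
    by auto
  have "N (vec_nth v) - N (vec_nth w) \<le> N (vec_nth (v - w))"
    "N (vec_nth w) - N (vec_nth v) \<le> N (vec_nth (w - v))"
    using is_norm_diff_le[OF assms] diff by auto
  moreover have "N (vec_nth (w - v)) = N (vec_nth (v - w))"
    using is_norm_minus[OF assms, of "vec_nth (v - w)"] diff by simp
  ultimately show "dist (N (vec_nth v)) (N (vec_nth w)) \<le> ?C * dist v w"
    using is_norm_le_mult_norm[OF assms, of "v - w"] by (simp add: dist_real_def dist_norm)
  show "0 \<le> ?C"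
    by (simp add: sum_nonneg is_norm_nonneg[OF assms])
qed

lemma is_norm_ge_mult_norm:
  fixes N :: "('n::finite \<Rightarrow> real) \<Rightarrow> real"
  assumes "is_norm N"
  obtains c where "c > 0" "\<And>v. c * norm v \<le> N (vec_nth v)"
proof -
  have "sphere (0::real^'n) 1 \<noteq> {}"
    using norm_axis_1 by (metis mem_sphere_0 empty_iff)
  moreover have "continuous_on (sphere 0 1) (\<lambda>v::real^'n. N (vec_nth v))"
    using lipschitz_on_continuous_on[OF is_norm_lipschitz[OF assms]] continuous_on_subset
    by blast
  ultimately obtain u :: "real^'n" where u: "u \<in> sphere 0 1"
    and min: "\<And>w. w \<in> sphere 0 1 \<Longrightarrow> N (vec_nth u) \<le> N (vec_nth w)"
    using continuous_attains_inf[OF compact_sphere] by blast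
  have "u \<noteq> 0"
    using u by auto
  then have "vec_nth u \<noteq> (\<lambda>_. 0)"
    by (metis vec_eq_iff zero_index)
  then have pos: "N (vec_nth u) > 0"
    by (rule is_norm_pos[OF assms])
  have "N (vec_nth u) * norm v \<le> N (vec_nth v)" for v :: "real^'n"
  proof (cases "v = 0")
    case True
    then show ?thesis
      using is_norm_nonneg[OF assms] by simp
  next
    case False
    then have "N (vec_nth u) \<le> N (vec_nth (v /\<^sub>R norm v))"
      by (intro min) simp
    also have "vec_nth (v /\<^sub>R norm v) = (\<lambda>i. (1 / norm v) * v $ i)"
      by (auto simp: divide_inverse mult.commute)
    also have "N \<dots> = N (vec_nth v) / norm v"
      using is_norm_scale[OF assms, of "1 / norm v" "vec_nth v"] by simp
    finally show ?thesis
      using False by (simp add: field_simps)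
  qed
  then show thesis
    using that pos by blast
qed

lemma bdd_above_dual_norm_set:
  fixes N :: "('n::finite \<Rightarrow> real) \<Rightarrow> real"
  assumes "is_norm N"
  shows "bdd_above {ip f \<phi> | f. N f \<le> 1}"
proof -
  obtain c where c: "c > 0" "\<And>v. c * norm v \<le> N (vec_nth v)"
    using is_norm_ge_mult_norm[OF assms] by blast
  show ?thesis
  proof (rule bdd_aboveI, clarify)
    fix f :: "'n \<Rightarrow> real"
    assume "N f \<le> 1"
    moreover have "vec_nth (vec_lambda f) = f"
      by auto
    ultimately have f: "norm (vec_lambda f) \<le> 1 / c"
      using c(2)[of "vec_lambda f"] c(1) by (simp add: field_simps)
    have "ip f \<phi> \<le> \<bar>\<Sum>x\<in>UNIV. f x * \<phi> x\<bar> / real CARD('n)"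
      unfolding ip_def expect_def by (intro divide_right_mono) auto
    also have "\<dots> \<le> \<bar>\<Sum>x\<in>UNIV. f x * \<phi> x\<bar> / 1"
      by (intro divide_left_mono) auto
    also have "\<dots> = \<bar>vec_lambda f \<bullet> vec_lambda \<phi>\<bar>"
      by (simp add: inner_vec_def)
    also have "\<dots> \<le> norm (vec_lambda f) * norm (vec_lambda \<phi>)"
      by (rule Cauchy_Schwarz_ineq2)
    also have "\<dots> \<le> 1 / c * norm (vec_lambda \<phi>)"
      by (rule mult_right_mono[OF f]) simp
    finally show "ip f \<phi> \<le> 1 / c * norm (vec_lambda \<phi>)" .
  qed
qed

lemma ip_scale_left: "ip (\<lambda>x. c * f x) \<phi> = c * ip f \<phi>"
  unfolding ip_def expect_def by (simp add: sum_distrib_left mult.assoc)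

lemma ip_le_norm_mult_dual_norm:
  assumes "is_norm N"
  shows "ip f \<phi> \<le> N f * dual_norm N \<phi>"
proof (cases "f = (\<lambda>_. 0)")
  case True
  then show ?thesis
    using is_norm_zero[OF assms] by (simp add: ip_def expect_def)
next
  case False
  then have pos: "N f > 0"
    by (rule is_norm_pos[OF assms])
  have "N (\<lambda>x. (1 / N f) * f x) = \<bar>1 / N f\<bar> * N f"
    by (rule is_norm_scale[OF assms])
  then have "N (\<lambda>x. (1 / N f) * f x) \<le> 1"
    using pos by simp
  then have "ip (\<lambda>x. (1 / N f) * f x) \<phi> \<le> dual_norm N \<phi>"
    unfolding dual_norm_def by (intro cSup_upper bdd_above_dual_norm_set[OF assms]) blast
  then have "ip f \<phi> / N f \<le> dual_norm N \<phi>"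
    by (simp only: ip_scale_left) simp
  then show ?thesis
    using pos by (simp add: field_simps)
qed

lemma abs_ip_le_norm_mult_dual_norm:
  assumes "is_norm N"
  shows "\<bar>ip f \<phi>\<bar> \<le> N f * dual_norm N \<phi>"
  using ip_le_norm_mult_dual_norm[OF assms, of f \<phi>]
    ip_le_norm_mult_dual_norm[OF assms, of "\<lambda>x. - f x" \<phi>]
    ip_scale_left[of "-1" f \<phi>] is_norm_minus[OF assms, of f]
  by simp

lemma abs_expect_le_norm:
  assumes "is_norm N" "dual_norm N (\<lambda>_. 1) = 1"
  shows "\<bar>expect f\<bar> \<le> N f"
  using abs_ip_le_norm_mult_dual_norm[OF assms(1), of f "\<lambda>_. 1"] assms(2)
  by (simp add: ip_def)

lemma abs_le_const_mult_dual_norm: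
  fixes \<phi> :: "'n::finite \<Rightarrow> real"
  assumes "is_norm N"
  shows "\<bar>\<phi> a\<bar> \<le> real CARD('n) * N (indicator {a}) * dual_norm N \<phi>"
proof -
  have "ip (indicator {a}) \<phi> = \<phi> a / real CARD('n)"
    unfolding ip_def expect_def by (simp add: indicator_def if_distrib cong: if_cong)
  then have "\<bar>\<phi> a\<bar> = real CARD('n) * \<bar>ip (indicator {a}) \<phi>\<bar>"
    by (simp add: abs_mult)
  also have "\<dots> \<le> real CARD('n) * (N (indicator {a}) * dual_norm N \<phi>)"
    by (intro mult_left_mono abs_ip_le_norm_mult_dual_norm[OF assms]) simp
  finally show ?thesis
    by (simp add: mult.assoc)
qed

lemma is_algebra_norm_power_le:
  assumes "is_algebra_norm M"
  shows "M (\<lambda>x. \<phi> x ^ k) \<le> M \<phi> ^ k"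
proof (induction k)
  case 0
  then show ?case
    using assms unfolding is_algebra_norm_def by simp
next
  case (Suc k)
  have "M (\<lambda>x. \<phi> x ^ Suc k) \<le> M \<phi> * M (\<lambda>x. \<phi> x ^ k)"
    using assms unfolding is_algebra_norm_def by simp
  also have "\<dots> \<le> M \<phi> * M \<phi> ^ k"
    using Suc assms is_norm_nonneg unfolding is_algebra_norm_def by (blast intro: mult_left_mono)
  finally show ?case
    by simp
qed

lemma le_if_powers_le_const_mult:
  fixes s t C :: real
  assumes "0 \<le> s" and bound: "\<And>k. t ^ k \<le> C * s ^ k"
  shows "t \<le> s"
proof (rule ccontr)
  assume "\<not> t \<le> s"
  then have "s < t" by simp
  show False
  proof (cases "s = 0")
    case True
    then show False
      using bound[of 1] \<open>s < t\<close> by simp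
  next
    case False
    then have "1 < t / s"
      using \<open>0 \<le> s\<close> \<open>s < t\<close> by simp
    then obtain k where "C < (t / s) ^ k"
      using real_arch_pow by blast
    then have "C * s ^ k < t ^ k"
      using False \<open>0 \<le> s\<close> by (simp add: power_divide field_simps)
    then show False
      using bound[of k] by simp
  qed
qed

lemma abs_le_dual_norm:
  fixes \<phi> :: "'n::finite \<Rightarrow> real"
  assumes "is_norm N" "is_algebra_norm (dual_norm N)"
  shows "\<bar>\<phi> a\<bar> \<le> dual_norm N \<phi>"
proof (rule le_if_powers_le_const_mult)
  let ?C = "real CARD('n) * N (indicator {a})"
  show "0 \<le> dual_norm N \<phi>"
    using assms(2) is_norm_nonneg unfolding is_algebra_norm_def by blast
  fix k
  have "\<bar>\<phi> a\<bar> ^ k \<le> ?C * dual_norm N (\<lambda>x. \<phi> x ^ k)"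
    using abs_le_const_mult_dual_norm[OF assms(1), of "\<lambda>x. \<phi> x ^ k" a] by (simp add: power_abs)
  also have "\<dots> \<le> ?C * dual_norm N \<phi> ^ k"
    using is_algebra_norm_power_le[OF assms(2)] is_norm_nonneg[OF assms(1)]
    by (intro mult_left_mono) simp_all
  finally show "\<bar>\<phi> a\<bar> ^ k \<le> ?C * dual_norm N \<phi> ^ k" .
qed

theorem lemma4p2:
  fixes N :: "('n::finite \<Rightarrow> real) \<Rightarrow> real"
  assumes "is_norm N"
    and "is_algebra_norm (dual_norm N)"
  shows "\<forall>f. N f \<ge> \<bar>expect f\<bar> \<and> dual_norm N f \<ge> sup_norm f"
proof (intro allI conjI)
  fix f :: "'n \<Rightarrow> real"
  have "dual_norm N (\<lambda>_. 1) = 1"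
    using assms(2) unfolding is_algebra_norm_def by blast
  then show "N f \<ge> \<bar>expect f\<bar>"
    by (rule abs_expect_le_norm[OF assms(1)])
  show "dual_norm N f \<ge> sup_norm f"
    unfolding sup_norm_def using abs_le_dual_norm[OF assms] by simp
qed

end
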